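(* Let $B_1,B_2\subset\mathbb{R}^m/\mathbb{Z}^m$ be balls. Let $\mathbf{q}_1,\mathbf{q}_2\in\mathbb{Z}^n\setminus\{\mathbf0\}$ be parallel and $\mathbf{r}_1,\mathbf{r}_2\in\mathbb{Z}^{n'}\setminus\{\mathbf0\}$ be parallel, with $|\mathbf{q}_i|=|\mathbf{r}_i|$ for $i=1,2$, and such that either both pairs point in the same direction or both pairs point in opposite directions (i.e. $\mathbf{q}_1\cdot\mathbf{q}_2$ and $\mathbf{r}_1\cdot\mathbf{r}_2$ have the same sign). Then \[ |A_{n,m}(\mathbf{q}_1,B_1)\cap A_{n,m}(\mathbf{q}_2,B_2)|=|A_{n',m}(\mathbf{r}_1,B_1)\cap A_{n',m}(\mathbf{r}_2,B_2)|. \]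
   Context: For $\mathbf{q}\in\mathbb{Z}^n$, $|\mathbf{q}|=\max_i|q_i|$. Balls are max-norm balls in $\mathbb{R}^m/\mathbb{Z}^m$ and $|\cdot|$ is Lebesgue measure. For $\mathbf{q}\in\mathbb{Z}^n$ and a ball $B$, $A_{n,m}(\mathbf{q},B)=\{\mathbf{x}\in[0,1]^{nm}:\mathbf{q}\mathbf{x}+\mathbf{p}\in B\text{ for some }\mathbf{p}\in\mathbb{Z}^m\}$, where $\mathbf{x}$ is an $n\times m$ matrix and $\mathbf{q}\mathbf{x}$ the row-vector–matrix product. *)

theory Defs
  imports "HOL-Analysis.Analysis"
begin

definition int_maxnorm :: "int^'n \<Rightarrow> int" where
  "int_maxnorm q = Max (range (\<lambda>i. \<bar>q $ i\<bar>))"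

definition int_dot :: "int^'n \<Rightarrow> int^'n \<Rightarrow> int" where
  "int_dot q q' = (\<Sum>i\<in>UNIV. q $ i * q' $ i)"

definition int_parallel :: "int^'n \<Rightarrow> int^'n \<Rightarrow> bool" where
  "int_parallel q q' \<longleftrightarrow> (\<exists>c::real. \<forall>i. real_of_int (q' $ i) = c * real_of_int (q $ i))"

text \<open>Open max-norm ball in R^m with centre c and radius rho; its image in R^m/Z^m is the
  ball of the torus. Membership of a point of the torus is tested on representatives,
  with the integer translate p quantified in the definition of A below.\<close>
definition max_ball :: "real^'m \<Rightarrow> real \<Rightarrow> (real^'m) set" where
  "max_ball c \<rho> = {y. \<forall>j. \<bar>y $ j - c $ j\<bar> < \<rho>}"

definition A_set :: "int^'n \<Rightarrow> (real^'m) set \<Rightarrow> (real^'m^'n) set" where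
  "A_set q B = {x. (\<forall>i j. 0 \<le> x $ i $ j \<and> x $ i $ j \<le> 1) \<and>
      (\<exists>p::int^'m. ((\<chi> i. real_of_int (q $ i)) v* x) + (\<chi> j. real_of_int (p $ j)) \<in> B)}"

end

theory Submission
  imports Defs
begin

text \<open>Write q1 = a u and q2 = b u with a, b coprime and u a nonzero integer vector. Since a, b
  are coprime, \<bar>u\<bar> is the gcd of \<bar>q1\<bar> and \<bar>q2\<bar>; so the max-norms determine \<bar>a\<bar> and \<bar>b\<bar>,
  and the sign of q1 \<cdot> q2 determines the sign of a b. Replacing the primitive vector of the
  r's by its negative if necessary, r1 = a w and r2 = b w with the same a, b. It remains to
  see that the measure of A(a u, B1) \<inter> A(b u, B2) does not depend on u: the map x \<mapsto> u x
  pushes Lebesgue measure on [0,1]^(nm) forward to Haar measure on the torus, so the measure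
  equals that of the set of z in the torus with a z \<in> B1 and b z \<in> B2.\<close>

section \<open>Translation invariance of periodic integrals over the unit cube\<close>

definition Basis_periodic :: "('a::euclidean_space \<Rightarrow> 'b) \<Rightarrow> bool" where
  "Basis_periodic h \<longleftrightarrow> (\<forall>x. \<forall>b\<in>Basis. h (x + b) = h x)"

lemma Basis_periodicD: "Basis_periodic h \<Longrightarrow> b \<in> Basis \<Longrightarrow> h (x + b) = h x"
  by (simp add: Basis_periodic_def)

lemma Basis_periodic_shift: "Basis_periodic h \<Longrightarrow> Basis_periodic (\<lambda>x. h (x + c))"
  unfolding Basis_periodic_def by (metis add.commute add.left_commute)

lemma Basis_periodic_int_multiple:
  assumes per: "Basis_periodic h" and b: "b \<in> Basis"
  shows "h (x + of_int k *\<^sub>R b) = h x"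
proof (induction k rule: int_induct[where k = 0])
  case base
  then show ?case by simp
next
  case (step1 i)
  have "h (x + of_int (i + 1) *\<^sub>R b) = h ((x + of_int i *\<^sub>R b) + b)"
    by (simp add: algebra_simps)
  with step1 show ?case using Basis_periodicD[OF per b] by simp
next
  case (step2 i)
  have "h (x + of_int i *\<^sub>R b) = h ((x + of_int (i - 1) *\<^sub>R b) + b)"
    by (simp add: algebra_simps)
  with step2 show ?case using Basis_periodicD[OF per b] by simp
qed

lemma nn_integral_lborel_translate:
  fixes c :: "'a::euclidean_space"
  assumes "f \<in> borel_measurable borel"
  shows "(\<integral>\<^sup>+ x. f (x + c) \<partial>lborel) = (\<integral>\<^sup>+ x. f x \<partial>lborel)"
proof -
  have "(\<integral>\<^sup>+ x. f x \<partial>lborel) = (\<integral>\<^sup>+ x. f x \<partial>distr lborel borel ((+) c))"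
    by (simp add: lborel_distr_plus)
  also have "\<dots> = (\<integral>\<^sup>+ x. f (c + x) \<partial>lborel)"
    by (rule nn_integral_distr) (auto simp: assms)
  finally show ?thesis
    by (simp add: add.commute)
qed

definition half_open_unit_cube :: "'a::euclidean_space set" where
  "half_open_unit_cube = {x. \<forall>b\<in>Basis. 0 \<le> x \<bullet> b \<and> x \<bullet> b < 1}"

definition half_open_slab :: "'a::euclidean_space \<Rightarrow> real \<Rightarrow> real \<Rightarrow> 'a set" where
  "half_open_slab b s t =
     {x. (\<forall>b'\<in>Basis - {b}. 0 \<le> x \<bullet> b' \<and> x \<bullet> b' < 1) \<and> s \<le> x \<bullet> b \<and> x \<bullet> b < t}"

lemma half_open_unit_cube_borel [measurable]: "half_open_unit_cube \<in> sets borel"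
  unfolding half_open_unit_cube_def by measurable

lemma half_open_slab_borel [measurable]: "half_open_slab b s t \<in> sets borel"
  unfolding half_open_slab_def by measurable

lemma indicator_half_open_unit_cube_split:
  assumes "b \<in> Basis" and "0 \<le> t" "t \<le> 1"
  shows "indicator half_open_unit_cube x
       = (indicator (half_open_slab b 0 t) x + indicator (half_open_slab b t 1) x :: ennreal)"
  using assms by (auto simp: half_open_unit_cube_def half_open_slab_def indicator_def)

lemma indicator_half_open_unit_cube_diff_shift:
  assumes b: "b \<in> Basis" and "0 \<le> t" "t \<le> 1"
  shows "indicator half_open_unit_cube (y - t *\<^sub>R b)
       = (indicator (half_open_slab b t 1) y + indicator (half_open_slab b 1 (1 + t)) y :: ennreal)"
proof -
  have "(y - t *\<^sub>R b) \<bullet> b' = y \<bullet> b' - (if b' = b then t else 0)" if "b' \<in> Basis" for b'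
    using b that by (auto simp: inner_diff_left inner_Basis)
  with assms show ?thesis
    by (auto simp: half_open_unit_cube_def half_open_slab_def indicator_def)
qed

lemma indicator_half_open_slab_add_Basis:
  assumes b: "b \<in> Basis"
  shows "indicator (half_open_slab b 1 (1 + t)) (x + b) = (indicator (half_open_slab b 0 t) x :: ennreal)"
proof -
  have "(x + b) \<bullet> b' = x \<bullet> b' + (if b' = b then 1 else 0)" if "b' \<in> Basis" for b'
    using b that by (auto simp: inner_add_left inner_Basis)
  with b show ?thesis
    by (auto simp: half_open_slab_def indicator_def)
qed

lemma nn_integral_half_open_cube_periodic_shift_small:
  fixes h :: "'a::euclidean_space \<Rightarrow> ennreal"
  assumes hm: "h \<in> borel_measurable borel" and per: "Basis_periodic h"
    and b: "b \<in> Basis" and t: "0 \<le> t" "t \<le> 1"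
  shows "(\<integral>\<^sup>+ x. h (x + t *\<^sub>R b) * indicator half_open_unit_cube x \<partial>lborel)
       = (\<integral>\<^sup>+ x. h x * indicator half_open_unit_cube x \<partial>lborel)"
proof -
  let ?S = "\<lambda>l r. half_open_slab b l r"
  have "(\<integral>\<^sup>+ x. h (x + t *\<^sub>R b) * indicator half_open_unit_cube x \<partial>lborel)
      = (\<integral>\<^sup>+ y. h y * indicator half_open_unit_cube (y - t *\<^sub>R b) \<partial>lborel)"
    using nn_integral_lborel_translate[of "\<lambda>y. h y * indicator half_open_unit_cube (y - t *\<^sub>R b)" "t *\<^sub>R b"]
      hm by simp
  also have "\<dots> = (\<integral>\<^sup>+ y. h y * indicator (?S t 1) y \<partial>lborel)
                + (\<integral>\<^sup>+ y. h y * indicator (?S 1 (1 + t)) y \<partial>lborel)"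
    using hm by (simp add: indicator_half_open_unit_cube_diff_shift[OF b t] distrib_left nn_integral_add)
  \<comment> \<open>periodicity moves the slab sticking out of the cube back to its bottom\<close>
  also have "(\<integral>\<^sup>+ y. h y * indicator (?S 1 (1 + t)) y \<partial>lborel)
           = (\<integral>\<^sup>+ y. h y * indicator (?S 0 t) y \<partial>lborel)"
    using nn_integral_lborel_translate[where f = "\<lambda>y. h y * indicator (?S 1 (1 + t)) y" and c = b] hm
    by (simp add: Basis_periodicD[OF per b] indicator_half_open_slab_add_Basis[OF b])
  also have "(\<integral>\<^sup>+ y. h y * indicator (?S t 1) y \<partial>lborel) + (\<integral>\<^sup>+ y. h y * indicator (?S 0 t) y \<partial>lborel)
           = (\<integral>\<^sup>+ x. h x * indicator half_open_unit_cube x \<partial>lborel)"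
    using hm by (simp add: indicator_half_open_unit_cube_split[OF b t] distrib_left nn_integral_add add.commute)
  finally show ?thesis .
qed

lemma nn_integral_half_open_cube_periodic_shift_Basis:
  fixes h :: "'a::euclidean_space \<Rightarrow> ennreal"
  assumes hm: "h \<in> borel_measurable borel" and per: "Basis_periodic h" and b: "b \<in> Basis"
  shows "(\<integral>\<^sup>+ x. h (x + t *\<^sub>R b) * indicator half_open_unit_cube x \<partial>lborel)
       = (\<integral>\<^sup>+ x. h x * indicator half_open_unit_cube x \<partial>lborel)"
proof -
  have "h (x + t *\<^sub>R b) = h (x + frac t *\<^sub>R b)" for x
    using Basis_periodic_int_multiple[OF per b, of "x + frac t *\<^sub>R b" "\<lfloor>t\<rfloor>"]
    by (simp add: frac_def algebra_simps)
  then show ?thesis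
    using nn_integral_half_open_cube_periodic_shift_small[OF hm per b, of "frac t"]
    by (simp add: frac_ge_0 frac_lt_1 less_imp_le)
qed

lemma nn_integral_half_open_cube_periodic_translate:
  fixes h :: "'a::euclidean_space \<Rightarrow> ennreal"
  assumes "h \<in> borel_measurable borel" and "Basis_periodic h"
  shows "(\<integral>\<^sup>+ x. h (x + c) * indicator half_open_unit_cube x \<partial>lborel)
       = (\<integral>\<^sup>+ x. h x * indicator half_open_unit_cube x \<partial>lborel)"
proof -
  have "(\<integral>\<^sup>+ x. h (x + (\<Sum>b\<in>S. (c \<bullet> b) *\<^sub>R b)) * indicator half_open_unit_cube x \<partial>lborel)
      = (\<integral>\<^sup>+ x. h x * indicator half_open_unit_cube x \<partial>lborel)"
    if "finite S" "S \<subseteq> Basis" "h \<in> borel_measurable borel" "Basis_periodic h" for S h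
    using that
  proof (induction S arbitrary: h rule: finite_induct)
    case empty
    then show ?case by simp
  next
    case (insert b S)
    let ?h = "\<lambda>y. h (y + (\<Sum>b\<in>S. (c \<bullet> b) *\<^sub>R b))"
    have "?h \<in> borel_measurable borel" "Basis_periodic ?h"
      using insert.prems by (auto intro: Basis_periodic_shift)
    then have "(\<integral>\<^sup>+ x. ?h (x + (c \<bullet> b) *\<^sub>R b) * indicator half_open_unit_cube x \<partial>lborel)
             = (\<integral>\<^sup>+ x. ?h x * indicator half_open_unit_cube x \<partial>lborel)"
      using insert.prems by (intro nn_integral_half_open_cube_periodic_shift_Basis) auto
    with insert show ?case
      by (simp add: algebra_simps)
  qed
  from this[of Basis h] assms show ?thesis
    by (simp add: euclidean_representation)
qed

lemma AE_indicator_unit_cube_eq_half_open: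
  "AE x in lborel. indicator (cbox 0 One) x = (indicator (half_open_unit_cube :: 'a::euclidean_space set) x :: ennreal)"
proof (rule AE_I')
  show "(\<Union>b\<in>Basis. cbox b One) \<in> null_sets (lborel :: 'a measure)"
  proof (rule null_sets.finite_UN)
    fix b :: 'a
    assume b: "b \<in> Basis"
    have side_zero: "(\<Prod>b'\<in>Basis. (One - b) \<bullet> b') = 0"
      using b by (intro prod_zero) (auto simp: inner_diff_left intro!: bexI[of _ b])
    have "emeasure lborel (cbox b One) = 0"
      by (simp only: emeasure_lborel_cbox_eq side_zero ennreal_0 if_cancel)
    then show "cbox b One \<in> null_sets lborel"
      by auto
  qed auto
  show "{x \<in> space lborel. indicator (cbox 0 One) x \<noteq> (indicator half_open_unit_cube x :: ennreal)}
      \<subseteq> (\<Union>b\<in>Basis. cbox b (One :: 'a))"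
  proof (rule subsetI)
    fix x :: 'a
    have "half_open_unit_cube \<subseteq> cbox (0::'a) One"
      by (auto simp: half_open_unit_cube_def mem_box less_imp_le)
    moreover assume "x \<in> {x \<in> space lborel. indicator (cbox 0 One) x \<noteq> (indicator half_open_unit_cube x :: ennreal)}"
    ultimately have "x \<in> cbox 0 One" "x \<notin> half_open_unit_cube"
      by (auto split: split_indicator_asm)
    then obtain b where "b \<in> Basis" "x \<bullet> b = 1"
      by (force simp: mem_box half_open_unit_cube_def)
    with \<open>x \<in> cbox 0 One\<close> have "x \<in> cbox b One"
      by (auto simp: mem_box inner_Basis)
    with \<open>b \<in> Basis\<close> show "x \<in> (\<Union>b\<in>Basis. cbox b One)"
      by blast
  qed
qed

lemma nn_integral_unit_cube_periodic_translate:
  fixes h :: "'a::euclidean_space \<Rightarrow> ennreal"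
  assumes "h \<in> borel_measurable borel" and "Basis_periodic h"
  shows "(\<integral>\<^sup>+ x. h (x + c) * indicator (cbox 0 One) x \<partial>lborel)
       = (\<integral>\<^sup>+ x. h x * indicator (cbox 0 One) x \<partial>lborel)"
proof -
  have "(\<integral>\<^sup>+ x. g x * indicator (cbox 0 One) x \<partial>lborel)
      = (\<integral>\<^sup>+ x. g x * indicator half_open_unit_cube x \<partial>lborel)" for g :: "'a \<Rightarrow> ennreal"
    by (rule nn_integral_cong_AE) (use AE_indicator_unit_cube_eq_half_open in auto)
  then show ?thesis
    using nn_integral_half_open_cube_periodic_translate[OF assms] by simp
qed

section \<open>Integer row vectors acting on the unit cube of matrices\<close>

lemma continuous_on_vector_matrix_mult [continuous_intros]:
  "continuous_on S f \<Longrightarrow> continuous_on S (\<lambda>x. v v* (f x :: real^'m^'n))"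
  unfolding vector_matrix_mult_def by (intro continuous_intros)

lemma borel_measurable_vector_matrix_mult [measurable]:
  "(\<lambda>x::real^'m^'n. v v* x) \<in> borel_measurable borel"
  by (intro borel_measurable_continuous_onI continuous_intros)

lemma vector_matrix_mult_axis: "v v* axis i a = (v $ i) *\<^sub>R (a :: real^'m)"
  by (simp add: vector_matrix_mult_def vec_eq_iff axis_def if_distrib if_distribR cong: if_cong)

lemma mem_cbox_vec: "(x :: 'a::euclidean_space ^'n) \<in> cbox a b \<longleftrightarrow> (\<forall>i. x $ i \<in> cbox (a $ i) (b $ i))"
  by (auto simp: mem_box Basis_vec_def inner_axis)

lemma One_vec_nth: "(One :: 'a::euclidean_space ^'n) $ i = One"
proof (rule euclidean_eqI)
  fix b :: 'a
  assume "b \<in> Basis"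
  then have "axis i b \<in> (Basis :: ('a^'n) set)"
    by (auto simp: Basis_vec_def)
  with \<open>b \<in> Basis\<close> show "One $ i \<bullet> b = One \<bullet> b"
    by (metis inner_axis inner_sum_Basis)
qed

lemma mem_unit_cube_matrix: "(x :: real^'m^'n) \<in> cbox 0 One \<longleftrightarrow> (\<forall>i j. 0 \<le> x $ i $ j \<and> x $ i $ j \<le> 1)"
  unfolding mem_cbox_vec mem_box_cart One_vec_nth by simp

lemma emeasure_lborel_unit_cube: "emeasure lborel (cbox (0::'a::euclidean_space) One) = 1"
  by (subst emeasure_lborel_cbox_eq) (auto intro!: prod.neutral)

lemma Basis_periodic_int_vector_mult:
  fixes u :: "int^'n" and h :: "real^'m \<Rightarrow> 'b"
  assumes per: "Basis_periodic h"
  shows "Basis_periodic (\<lambda>x::real^'m^'n. h ((\<chi> i. real_of_int (u $ i)) v* x))"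
proof -
  have "h ((\<chi> i. real_of_int (u $ i)) v* (x + axis i (axis j 1))) = h ((\<chi> i. real_of_int (u $ i)) v* x)"
    for x :: "real^'m^'n" and i j
  proof -
    have "axis j 1 \<in> (Basis :: (real^'m) set)"
      by (auto simp: Basis_vec_def)
    then show ?thesis
      using Basis_periodic_int_multiple[OF per, of "axis j 1" _ "u $ i"]
      by (simp add: vector_matrix_mult_add_rdistrib vector_matrix_mult_axis)
  qed
  then show ?thesis
    by (auto simp: Basis_periodic_def Basis_vec_def)
qed

text \<open>Moving row i0 of x by a / u_i0 moves u x by a.\<close>

lemma nn_integral_unit_cube_int_vector_mult_translate:
  fixes u :: "int^'n" and h :: "real^'m \<Rightarrow> ennreal"
  assumes u: "u \<noteq> 0" and hm: "h \<in> borel_measurable borel" and per: "Basis_periodic h"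
  shows "(\<integral>\<^sup>+ x. h ((\<chi> i. real_of_int (u $ i)) v* x + a) * indicator (cbox 0 One) (x::real^'m^'n) \<partial>lborel)
       = (\<integral>\<^sup>+ x. h ((\<chi> i. real_of_int (u $ i)) v* x) * indicator (cbox 0 One) x \<partial>lborel)"
proof -
  define uv where "uv = (\<chi> i. real_of_int (u $ i))"
  obtain i0 where "u $ i0 \<noteq> 0"
    using u by (auto simp: vec_eq_iff)
  then have "uv v* (x + axis i0 ((1 / uv $ i0) *\<^sub>R a)) = uv v* x + a" for x
    by (simp add: uv_def vector_matrix_mult_add_rdistrib vector_matrix_mult_axis)
  then have "(\<integral>\<^sup>+ x. h (uv v* x + a) * indicator (cbox 0 One) x \<partial>lborel)
      = (\<integral>\<^sup>+ x. h (uv v* (x + axis i0 ((1 / uv $ i0) *\<^sub>R a))) * indicator (cbox 0 One) (x::real^'m^'n) \<partial>lborel)"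
    by simp
  also have "\<dots> = (\<integral>\<^sup>+ x. h (uv v* x) * indicator (cbox 0 One) x \<partial>lborel)"
    unfolding uv_def using measurable_compose[OF borel_measurable_vector_matrix_mult hm]
    by (intro nn_integral_unit_cube_periodic_translate Basis_periodic_int_vector_mult per)
  finally show ?thesis
    unfolding uv_def .
qed

text \<open>Averaging over the translations a \<in> [0,1]^m and applying Fubini turns the integral of
  h(u x) into the integral over x of the integral of the periodic function a \<mapsto> h(u x + a).\<close>

lemma nn_integral_unit_cube_int_vector_mult:
  fixes u :: "int^'n" and h :: "real^'m \<Rightarrow> ennreal"
  assumes u: "u \<noteq> 0" and hm: "h \<in> borel_measurable borel" and per: "Basis_periodic h"
  shows "(\<integral>\<^sup>+ x. h ((\<chi> i. real_of_int (u $ i)) v* x) * indicator (cbox 0 One) (x::real^'m^'n) \<partial>lborel)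
       = (\<integral>\<^sup>+ z. h z * indicator (cbox 0 One) z \<partial>lborel)"
proof -
  define uv where "uv = (\<chi> i. real_of_int (u $ i))"
  define C where "C = cbox (0::real^'m^'n) One"
  define D where "D = cbox (0::real^'m) One"
  define I where "I = (\<integral>\<^sup>+ x. h (uv v* x) * indicator C x \<partial>lborel)"
  have "I = (\<integral>\<^sup>+ a. I * indicator D a \<partial>lborel)"
    by (simp add: nn_integral_cmult_indicator D_def emeasure_lborel_unit_cube)
  also have "\<dots> = (\<integral>\<^sup>+ a. (\<integral>\<^sup>+ x. h (uv v* x + a) * indicator C x * indicator D a \<partial>lborel) \<partial>lborel)"
  proof (rule nn_integral_cong)
    fix a
    have "(\<lambda>x. h (uv v* x + a) * indicator C x) \<in> borel_measurable lborel"
      unfolding C_def using hm by measurable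
    with nn_integral_unit_cube_int_vector_mult_translate[OF assms, of a]
    show "I * indicator D a = (\<integral>\<^sup>+ x. h (uv v* x + a) * indicator C x * indicator D a \<partial>lborel)"
      by (simp add: nn_integral_multc I_def C_def uv_def)
  qed
  also have "\<dots> = (\<integral>\<^sup>+ x. (\<integral>\<^sup>+ a. h (uv v* x + a) * indicator C x * indicator D a \<partial>lborel) \<partial>lborel)"
  proof (rule lborel_pair.Fubini')
    have "(\<lambda>(x, a). h (uv v* x + a) * indicator C x * indicator D a) \<in> borel_measurable (borel \<Otimes>\<^sub>M borel)"
      unfolding C_def D_def using hm by measurable
    then show "(\<lambda>(x, a). h (uv v* x + a) * indicator C x * indicator D a) \<in> borel_measurable (lborel \<Otimes>\<^sub>M lborel)"
      by (simp only: measurable_cong_sets[OF sets_pair_measure_cong[OF sets_lborel sets_lborel] refl])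
  qed
  also have "\<dots> = (\<integral>\<^sup>+ x. (\<integral>\<^sup>+ z. h z * indicator D z \<partial>lborel) * indicator C x \<partial>lborel)"
  proof (rule nn_integral_cong)
    fix x
    have "(\<integral>\<^sup>+ a. h (a + uv v* x) * indicator D a \<partial>lborel) = (\<integral>\<^sup>+ z. h z * indicator D z \<partial>lborel)"
      unfolding D_def by (rule nn_integral_unit_cube_periodic_translate[OF hm per])
    moreover have "(\<lambda>a. h (a + uv v* x) * indicator D a) \<in> borel_measurable lborel"
      unfolding D_def using hm by measurable
    ultimately show "(\<integral>\<^sup>+ a. h (uv v* x + a) * indicator C x * indicator D a \<partial>lborel)
             = (\<integral>\<^sup>+ z. h z * indicator D z \<partial>lborel) * indicator C x"
      using nn_integral_multc[of "\<lambda>a. h (a + uv v* x) * indicator D a" lborel "indicator C x"]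
      by (simp add: add.commute mult.commute mult.left_commute)
  qed
  also have "\<dots> = (\<integral>\<^sup>+ z. h z * indicator D z \<partial>lborel)"
    by (simp add: nn_integral_cmult_indicator C_def emeasure_lborel_unit_cube)
  finally show ?thesis
    unfolding I_def C_def D_def uv_def .
qed

section \<open>The sets A(q, B) for multiples q of a fixed vector\<close>

definition int_translates :: "(real^'m) set \<Rightarrow> (real^'m) set" where
  "int_translates B = {y. \<exists>p::int^'m. y + (\<chi> j. real_of_int (p $ j)) \<in> B}"

definition multiples_in :: "int \<Rightarrow> int \<Rightarrow> (real^'m) set \<Rightarrow> (real^'m) set \<Rightarrow> (real^'m) set" where
  "multiples_in a b B1 B2 = {z. of_int a *\<^sub>R z \<in> int_translates B1 \<and> of_int b *\<^sub>R z \<in> int_translates B2}"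

lemma open_int_translates:
  fixes B :: "(real^'m) set"
  assumes "open B"
  shows "open (int_translates B)"
proof -
  have "int_translates B = (\<Union>p::int^'m. (\<lambda>y. y + (\<chi> j. real_of_int (p $ j))) -` B)"
    by (auto simp: int_translates_def)
  moreover have "open ((\<lambda>y. y + (\<chi> j. real_of_int (p $ j))) -` B)" for p :: "int^'m"
    using \<open>open B\<close> by (intro continuous_open_vimage continuous_intros)
  ultimately show ?thesis
    by auto
qed

lemma open_multiples_in: "open B1 \<Longrightarrow> open B2 \<Longrightarrow> open (multiples_in a b B1 B2)"
proof -
  assume "open B1" "open B2"
  have "multiples_in a b B1 B2
      = (\<lambda>z. of_int a *\<^sub>R z) -` int_translates B1 \<inter> (\<lambda>z. of_int b *\<^sub>R z) -` int_translates B2"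
    by (auto simp: multiples_in_def)
  with \<open>open B1\<close> \<open>open B2\<close> show ?thesis
    by (auto intro!: open_Int continuous_open_vimage open_int_translates continuous_intros)
qed

lemma int_translates_add_int_vector:
  fixes y :: "real^'m"
  shows "y + (\<chi> j. real_of_int (k $ j)) \<in> int_translates B \<longleftrightarrow> y \<in> int_translates B"
proof -
  have sum: "(\<chi> j. real_of_int ((k + p) $ j)) = (\<chi> j. real_of_int (k $ j)) + (\<chi> j. real_of_int (p $ j))"
    for p :: "int^'m"
    by (simp add: vec_eq_iff)
  show ?thesis
    unfolding int_translates_def mem_Collect_eq
  proof
    assume "\<exists>p::int^'m. y + (\<chi> j. real_of_int (k $ j)) + (\<chi> j. real_of_int (p $ j)) \<in> B"
    then obtain p :: "int^'m" where "y + (\<chi> j. real_of_int (k $ j)) + (\<chi> j. real_of_int (p $ j)) \<in> B" ..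
    then show "\<exists>p::int^'m. y + (\<chi> j. real_of_int (p $ j)) \<in> B"
      by (intro exI[of _ "k + p"]) (simp only: sum add.assoc)
  next
    assume "\<exists>p::int^'m. y + (\<chi> j. real_of_int (p $ j)) \<in> B"
    then obtain p :: "int^'m" where "y + (\<chi> j. real_of_int (p $ j)) \<in> B" ..
    then show "\<exists>p::int^'m. y + (\<chi> j. real_of_int (k $ j)) + (\<chi> j. real_of_int (p $ j)) \<in> B"
    proof (intro exI)
      have "(\<chi> j. real_of_int (k $ j)) + (\<chi> j. real_of_int ((p - k) $ j)) = (\<chi> j. real_of_int (p $ j))"
        by (simp add: vec_eq_iff)
      with \<open>y + (\<chi> j. real_of_int (p $ j)) \<in> B\<close>
      show "y + (\<chi> j. real_of_int (k $ j)) + (\<chi> j. real_of_int ((p - k) $ j)) \<in> B"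
        by (simp only: add.assoc)
    qed
  qed
qed

lemma Basis_periodic_multiples_in:
  "Basis_periodic (indicator (multiples_in a b B1 B2) :: real^'m \<Rightarrow> ennreal)"
proof -
  have "z + axis j 1 \<in> multiples_in a b B1 B2 \<longleftrightarrow> z \<in> multiples_in a b B1 B2" for z :: "real^'m" and j
  proof -
    have "of_int c *\<^sub>R (z + axis j 1) = of_int c *\<^sub>R z + (\<chi> i. real_of_int ((axis j c :: int^'m) $ i))" for c
      by (simp add: vec_eq_iff axis_def distrib_left)
    then show ?thesis
      by (simp only: multiples_in_def mem_Collect_eq int_translates_add_int_vector)
  qed
  then show ?thesis
    by (auto simp: Basis_periodic_def Basis_vec_def indicator_def)
qed

lemma A_set_multiple_iff:
  fixes q u :: "int^'n" and x :: "real^'m^'n"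
  assumes "\<forall>i. q $ i = a * u $ i"
  shows "x \<in> A_set q B \<longleftrightarrow> x \<in> cbox 0 One \<and> of_int a *\<^sub>R ((\<chi> i. real_of_int (u $ i)) v* x) \<in> int_translates B"
proof -
  have "(\<chi> i. real_of_int (q $ i)) = of_int a *\<^sub>R (\<chi> i. real_of_int (u $ i))"
    using assms by (simp add: vec_eq_iff)
  then show ?thesis
    unfolding A_set_def int_translates_def mem_unit_cube_matrix by (simp add: scaleR_vector_matrix_assoc)
qed

lemma measure_A_set_inter_multiples:
  fixes q1 q2 u :: "int^'n" and B1 B2 :: "(real^'m) set"
  assumes u: "u \<noteq> 0" and B: "open B1" "open B2"
    and q1: "\<forall>i. q1 $ i = a * u $ i" and q2: "\<forall>i. q2 $ i = b * u $ i"
  shows "measure lebesgue (A_set q1 B1 \<inter> A_set q2 B2) = measure lebesgue (multiples_in a b B1 B2 \<inter> cbox 0 One)"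
proof -
  define E where "E = multiples_in a b B1 B2"
  define uv where "uv = (\<chi> i. real_of_int (u $ i))"
  have E [measurable]: "E \<in> sets borel"
    unfolding E_def using B by (intro borel_open open_multiples_in)
  have inter: "A_set q1 B1 \<inter> A_set q2 B2 = cbox 0 One \<inter> (\<lambda>x. uv v* x) -` E"
    by (auto simp: A_set_multiple_iff[OF q1] A_set_multiple_iff[OF q2] multiples_in_def E_def uv_def)
  have "emeasure lborel (cbox 0 One \<inter> (\<lambda>x::real^'m^'n. uv v* x) -` E)
      = (\<integral>\<^sup>+ x. indicator (cbox 0 One \<inter> (\<lambda>x. uv v* x) -` E) x \<partial>lborel)"
    using E by (intro nn_integral_indicator[symmetric]) measurable
  also have "\<dots> = (\<integral>\<^sup>+ x. indicator E (uv v* x) * indicator (cbox 0 One) x \<partial>lborel)"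
    by (intro nn_integral_cong) (simp split: split_indicator)
  also have "\<dots> = (\<integral>\<^sup>+ z. indicator E z * indicator (cbox 0 One) z \<partial>lborel)"
    unfolding uv_def E_def
    by (rule nn_integral_unit_cube_int_vector_mult[OF u _ Basis_periodic_multiples_in]) (use E[unfolded E_def] in measurable)
  also have "\<dots> = (\<integral>\<^sup>+ z. indicator (E \<inter> cbox 0 One) z \<partial>lborel)"
    by (intro nn_integral_cong) (simp split: split_indicator)
  also have "\<dots> = emeasure lborel (E \<inter> cbox 0 One)"
    using E by (intro nn_integral_indicator) measurable
  finally have "emeasure lborel (A_set q1 B1 \<inter> A_set q2 B2) = emeasure lborel (E \<inter> cbox 0 One)"
    unfolding inter .
  moreover have "A_set q1 B1 \<inter> A_set q2 B2 \<in> sets borel"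
    unfolding inter by measurable
  ultimately show ?thesis
    using E unfolding E_def by (simp add: measure_def)
qed

lemma open_max_ball: "open (max_ball c \<rho>)"
proof -
  have "max_ball c \<rho> = box (\<chi> j. c $ j - \<rho>) (\<chi> j. c $ j + \<rho>)"
    by (auto simp: max_ball_def mem_box_cart abs_less_iff algebra_simps)
  then show ?thesis
    by (simp only: open_box)
qed

section \<open>Parallel integer vectors\<close>

lemma int_parallel_coprime_factorization:
  fixes q1 q2 :: "int^'n"
  assumes q1: "q1 \<noteq> 0" and par: "int_parallel q1 q2"
  obtains u a b where "u \<noteq> 0" "coprime a b" "\<forall>i. q1 $ i = a * u $ i" "\<forall>i. q2 $ i = b * u $ i"
proof -
  obtain c where c: "\<And>i. real_of_int (q2 $ i) = c * real_of_int (q1 $ i)"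
    using par unfolding int_parallel_def by blast
  obtain i0 where i0: "q1 $ i0 \<noteq> 0"
    using q1 by (auto simp: vec_eq_iff)
  have cross: "q1 $ i0 * q2 $ i = q2 $ i0 * q1 $ i" for i
  proof -
    have "real_of_int (q1 $ i0 * q2 $ i) = real_of_int (q2 $ i0 * q1 $ i)"
      using c[of i] c[of i0] by simp
    then show ?thesis
      by (simp only: of_int_eq_iff)
  qed
  define g where "g = gcd (q1 $ i0) (q2 $ i0)"
  define a where "a = q1 $ i0 div g"
  define b where "b = q2 $ i0 div g"
  have g: "g \<noteq> 0" and ag: "q1 $ i0 = a * g" and bg: "q2 $ i0 = b * g"
    using i0 by (auto simp: g_def a_def b_def)
  have a: "a \<noteq> 0"
    using ag i0 by auto
  have cop: "coprime a b"
    unfolding a_def b_def g_def by (rule div_gcd_coprime) (use i0 in auto)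
  have ab: "a * q2 $ i = b * q1 $ i" for i
    using cross[of i] g unfolding ag bg by (simp add: ac_simps)
  define u where "u = (\<chi> i. q1 $ i div a)"
  have q1u: "q1 $ i = a * u $ i" for i
  proof -
    have "a dvd b * q1 $ i"
      by (metis ab dvd_triv_left)
    with cop show ?thesis
      by (simp add: u_def coprime_dvd_mult_right_iff)
  qed
  have q2u: "q2 $ i = b * u $ i" for i
    using ab[of i] a unfolding q1u by (simp add: mult.left_commute)
  have "u \<noteq> 0"
    using q1 by (auto simp: vec_eq_iff q1u)
  with cop q1u q2u show ?thesis
    using that by blast
qed

lemma int_maxnorm_scale:
  fixes q u :: "int^'n"
  assumes "\<forall>i. q $ i = a * u $ i"
  shows "int_maxnorm q = \<bar>a\<bar> * int_maxnorm u"
proof -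
  have "range (\<lambda>i. \<bar>q $ i\<bar>) = (\<lambda>t. \<bar>a\<bar> * t) ` range (\<lambda>i. \<bar>u $ i\<bar>)"
    using assms by (auto simp: abs_mult)
  moreover have "mono (\<lambda>t. \<bar>a\<bar> * t)"
    by (auto intro!: monoI mult_left_mono)
  ultimately show ?thesis
    unfolding int_maxnorm_def by (simp add: mono_Max_commute)
qed

lemma int_maxnorm_pos:
  fixes u :: "int^'n"
  assumes "u \<noteq> 0"
  shows "int_maxnorm u > 0"
proof -
  obtain i where "u $ i \<noteq> 0"
    using assms by (auto simp: vec_eq_iff)
  then have "0 < \<bar>u $ i\<bar>"
    by simp
  also have "\<bar>u $ i\<bar> \<le> int_maxnorm u"
    unfolding int_maxnorm_def by (rule Max_ge) auto
  finally show ?thesis .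
qed

lemma sgn_int_dot_multiples:
  fixes q1 q2 u :: "int^'n"
  assumes u: "u \<noteq> 0" and q1: "\<forall>i. q1 $ i = a * u $ i" and q2: "\<forall>i. q2 $ i = b * u $ i"
  shows "sgn (int_dot q1 q2) = sgn (a * b)"
proof -
  have "int_dot q1 q2 = a * b * (\<Sum>i\<in>UNIV. u $ i * u $ i)"
    unfolding int_dot_def using q1 q2 by (simp add: sum_distrib_left ac_simps)
  moreover obtain i where "u $ i \<noteq> 0"
    using u by (auto simp: vec_eq_iff)
  then have "(\<Sum>i\<in>UNIV. u $ i * u $ i) > 0"
    by (intro sum_pos2[of UNIV i]) (auto simp: zero_less_mult_iff)
  ultimately show ?thesis
    by (simp add: sgn_mult)
qed

lemma coprime_factors_unique:
  fixes a b a' b' N N' :: int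
  assumes "a \<noteq> 0" "b \<noteq> 0" and cop: "coprime a b" "coprime a' b'" and N: "N > 0" "N' > 0"
    and "\<bar>a\<bar> * N = \<bar>a'\<bar> * N'" "\<bar>b\<bar> * N = \<bar>b'\<bar> * N'"
    and "sgn (a * b) = sgn (a' * b')"
  shows "(a' = a \<and> b' = b) \<or> (a' = -a \<and> b' = -b)"
proof -
  have "gcd (N * \<bar>a\<bar>) (N * \<bar>b\<bar>) = N" "gcd (N' * \<bar>a'\<bar>) (N' * \<bar>b'\<bar>) = N'"
    using cop N by (simp_all flip: gcd_mult_distrib_int)
  then have "N = N'"
    using assms(7,8) by (simp add: mult.commute)
  then have "\<bar>a'\<bar> = \<bar>a\<bar>" "\<bar>b'\<bar> = \<bar>b\<bar>"
    using assms(7,8) N by simp_all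
  then have "a' = a \<or> a' = -a" "b' = b \<or> b' = -b"
    by (auto simp: abs_eq_iff)
  moreover have "sgn (a * b) \<noteq> 0"
    using assms(1,2) by (simp add: sgn_0_0)
  ultimately show ?thesis
    using assms(9) by (auto simp: sgn_mult)
qed

theorem mainTheorem7:
  fixes q1 q2 :: "int^'n" and r1 r2 :: "int^'k" and c1 c2 :: "real^'m" and \<rho>1 \<rho>2 :: real
  assumes "\<rho>1 > 0" and "\<rho>2 > 0"
    and "q1 \<noteq> 0" and "q2 \<noteq> 0" and "int_parallel q1 q2"
    and "r1 \<noteq> 0" and "r2 \<noteq> 0" and "int_parallel r1 r2"
    and "int_maxnorm q1 = int_maxnorm r1" and "int_maxnorm q2 = int_maxnorm r2"
    and "sgn (int_dot q1 q2) = sgn (int_dot r1 r2)"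
  shows "measure lebesgue (A_set q1 (max_ball c1 \<rho>1) \<inter> A_set q2 (max_ball c2 \<rho>2))
       = measure lebesgue (A_set r1 (max_ball c1 \<rho>1) \<inter> A_set r2 (max_ball c2 \<rho>2))"
proof -
  obtain u a b where u: "u \<noteq> 0" "coprime a b" and q: "\<forall>i. q1 $ i = a * u $ i" "\<forall>i. q2 $ i = b * u $ i"
    using int_parallel_coprime_factorization[OF assms(3,5)] by blast
  obtain v a' b' where v: "v \<noteq> 0" "coprime a' b'" and r: "\<forall>i. r1 $ i = a' * v $ i" "\<forall>i. r2 $ i = b' * v $ i"
    using int_parallel_coprime_factorization[OF assms(6,8)] by blast
  have "a \<noteq> 0" "b \<noteq> 0"
    using q assms(3,4) by (auto simp: vec_eq_iff)
  then have "(a' = a \<and> b' = b) \<or> (a' = -a \<and> b' = -b)"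
    using u v assms(9-11) int_maxnorm_pos[OF u(1)] int_maxnorm_pos[OF v(1)]
    by (intro coprime_factors_unique)
      (simp_all add: int_maxnorm_scale[OF q(1)] int_maxnorm_scale[OF q(2)] int_maxnorm_scale[OF r(1)]
        int_maxnorm_scale[OF r(2)] sgn_int_dot_multiples[OF u(1) q] sgn_int_dot_multiples[OF v(1) r])
  then obtain w :: "int^'k" where w: "w \<noteq> 0" "\<forall>i. r1 $ i = a * w $ i" "\<forall>i. r2 $ i = b * w $ i"
  proof
    assume "a' = a \<and> b' = b"
    then show ?thesis
      using that[of v] v(1) r by simp
  next
    assume "a' = -a \<and> b' = -b"
    then show ?thesis
      using that[of "-v"] v(1) r by simp
  qed
  show ?thesis
    using measure_A_set_inter_multiples[of u "max_ball c1 \<rho>1" "max_ball c2 \<rho>2", OF u(1) open_max_ball open_max_ball q]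
      measure_A_set_inter_multiples[of w "max_ball c1 \<rho>1" "max_ball c2 \<rho>2", OF w(1) open_max_ball open_max_ball w(2,3)]
    by simp
qed

end
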